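(* Let $X$ be a set and let $\mathcal P$ be a ring of subsets of $X$ (closed under finite intersections and finite unions) such that $\mathcal P\subseteq\mathcal P_{seq}$. Then the $\mathcal Q_{\mathcal P}$-topology on $X/\mathcal P$ is completely regular.
   Context: $[x]_{\mathcal P}=\{y\in X:\forall V\in\mathcal P\ (x\in V\iff y\in V)\}$, $X/\mathcal P=\{[x]_{\mathcal P}:x\in X\}$, $q(x)=[x]_{\mathcal P}$, and the $\mathcal Q_{\mathcal P}$-topology is the coarsest topology on $X/\mathcal P$ containing all sets $q[V]=\{[x]_{\mathcal P}:x\in V\}$, $V\in\mathcal P$. $\mathcal P_{seq}$ is the family of all sets $W$ for which there exist sequences $\{U_n\}_{n\in\omega}\subseteq\mathcal P$ and $\{V_n\}_{n\in\omega}\subseteq\mathcal P$ with $U_k\subseteq X\setminus V_k\subseteq U_{k+1}$ for every $k$ and $\bigcup_nU_n=W$. Completely regular spaces are assumed $T_1$. *)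

theory Defs
  imports "HOL-Analysis.Analysis"
begin

text \<open>A ring of subsets of X: a family of subsets of X closed under (binary, hence
finite nonempty) intersections and unions.\<close>
definition ring_of_subsets :: "'a set \<Rightarrow> 'a set set \<Rightarrow> bool" where
  "ring_of_subsets X P \<longleftrightarrow> P \<subseteq> Pow X \<and>
     (\<forall>A\<in>P. \<forall>B\<in>P. A \<inter> B \<in> P) \<and> (\<forall>A\<in>P. \<forall>B\<in>P. A \<union> B \<in> P)"

definition pclass :: "'a set \<Rightarrow> 'a set set \<Rightarrow> 'a \<Rightarrow> 'a set" where
  "pclass X P x = {y \<in> X. \<forall>V\<in>P. (x \<in> V \<longleftrightarrow> y \<in> V)}"

definition pquot :: "'a set \<Rightarrow> 'a set set \<Rightarrow> 'a set set" where
  "pquot X P = pclass X P ` X"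

definition QP_topology :: "'a set \<Rightarrow> 'a set set \<Rightarrow> 'a set topology" where
  "QP_topology X P = topology (arbitrary union_of
      (finite intersection_of (\<lambda>S. \<exists>V\<in>P. S = pclass X P ` V) relative_to pquot X P))"

definition Pseq :: "'a set \<Rightarrow> 'a set set \<Rightarrow> 'a set set" where
  "Pseq X P = {W. \<exists>U V :: nat \<Rightarrow> 'a set. range U \<subseteq> P \<and> range V \<subseteq> P \<and>
      (\<forall>k. U k \<subseteq> X - V k \<and> X - V k \<subseteq> U (Suc k)) \<and> (\<Union>n. U n) = W}"

end

theory Submission
  imports Defs
begin

text \<open>The sets \<open>q[V]\<close>, \<open>V \<in> P\<close>, form a subbase of the \<open>Q\<^sub>P\<close>-topology in which every
subbasic set \<open>q[W]\<close> is the increasing union of the open sets \<open>q[U\<^sub>n]\<close>, each contained in the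
closed set \<open>q[X - V\<^sub>n] \<subseteq> q[U\<^sub>n\<^sub>+\<^sub>1]\<close>. To separate a point from a closed set, take a basic
neighbourhood of the point avoiding it; it involves finitely many subbasic sets, and closing
them under the choice of the sequences \<open>U\<^sub>n, V\<^sub>n\<close> gives a countable subbase. The coarser
topology it generates is regular and second countable, hence normal, so Urysohn's lemma gives a
separating function there, which stays continuous for the finer \<open>Q\<^sub>P\<close>-topology. Being \<open>T\<^sub>0\<close> by
construction, the quotient is then also \<open>T\<^sub>1\<close>.\<close>

abbreviation subbase_topology :: "('b set \<Rightarrow> bool) \<Rightarrow> 'b set \<Rightarrow> 'b topology" where
  "subbase_topology B U \<equiv> topology (arbitrary union_of (finite intersection_of B relative_to U))"

lemma openin_subbase_topology_Inter:
  assumes "finite \<V>" "\<And>S. S \<in> \<V> \<Longrightarrow> B S"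
  shows "openin (subbase_topology B U) (U \<inter> \<Inter>\<V>)"
proof -
  have "(finite intersection_of B) (\<Inter>\<V>)"
    unfolding intersection_of_def using assms by auto
  then show ?thesis
    by (simp add: openin_subbase arbitrary_union_of_inc relative_to_inc)
qed

lemma openin_subbase_topology_inc:
  assumes "B S" "S \<subseteq> U"
  shows "openin (subbase_topology B U) S"
  using openin_subbase_topology_Inter[of "{S}" B U] assms by (simp add: Int_absorb1)

lemma subbase_topology_neighbourhood:
  assumes "openin (subbase_topology B U) W" "x \<in> W"
  obtains \<V> where "finite \<V>" "\<And>S. S \<in> \<V> \<Longrightarrow> B S" "x \<in> U \<inter> \<Inter>\<V>" "U \<inter> \<Inter>\<V> \<subseteq> W"
proof -
  have "(arbitrary union_of (finite intersection_of B relative_to U)) W"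
    using assms(1) openin_subbase by blast
  then obtain \<K> where \<K>: "\<K> \<subseteq> Collect (finite intersection_of B relative_to U)" "\<Union>\<K> = W"
    unfolding union_of_def arbitrary_def by auto
  then obtain K where "K \<in> \<K>" "x \<in> K"
    using assms(2) by auto
  with \<K> obtain \<V> where "finite \<V>" "\<V> \<subseteq> Collect B" "K = U \<inter> \<Inter>\<V>"
    unfolding relative_to_def intersection_of_def by auto
  with that \<open>K \<in> \<K>\<close> \<open>x \<in> K\<close> \<K>(2) show thesis
    by blast
qed

lemma openin_subbase_topology_mono:
  assumes "openin (subbase_topology B U) S" "\<And>S. B S \<Longrightarrow> B' S"
  shows "openin (subbase_topology B' U) S"
proof -
  have "(finite intersection_of B' relative_to U) T"
    if "(finite intersection_of B relative_to U) T" for T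
    by (rule relative_to_mono[OF that intersection_of_mono[OF _ assms(2)]])
  then show ?thesis
    using assms(1) unfolding openin_subbase by (rule union_of_mono[rotated])
qed

lemma second_countable_subbase_topology:
  assumes "countable (Collect B)"
  shows "second_countable (subbase_topology B U)"
  unfolding second_countable_def
proof (intro exI conjI)
  let ?\<B> = "(\<lambda>\<V>. U \<inter> \<Inter>\<V>) ` {\<V>. finite \<V> \<and> \<V> \<subseteq> Collect B}"
  show "countable ?\<B>"
    using assms by (intro countable_image countable_Collect_finite_subset)
  show "\<forall>V\<in>?\<B>. openin (subbase_topology B U) V"
    using openin_subbase_topology_Inter[of _ B U] by auto
  show "\<forall>W x. openin (subbase_topology B U) W \<and> x \<in> W \<longrightarrow> (\<exists>V\<in>?\<B>. x \<in> V \<and> V \<subseteq> W)"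
  proof (intro allI impI, elim conjE)
    fix W x assume "openin (subbase_topology B U) W" "x \<in> W"
    then obtain \<V> where "finite \<V>" "\<And>S. S \<in> \<V> \<Longrightarrow> B S" "x \<in> U \<inter> \<Inter>\<V>" "U \<inter> \<Inter>\<V> \<subseteq> W"
      by (rule subbase_topology_neighbourhood) auto
    then show "\<exists>V\<in>?\<B>. x \<in> V \<and> V \<subseteq> W"
      by (intro bexI[of _ "U \<inter> \<Inter>\<V>"]) auto
  qed
qed

lemma regular_space_subbase_topology:
  assumes "\<And>S x. B S \<Longrightarrow> x \<in> U \<inter> S \<Longrightarrow> \<exists>G C. openin (subbase_topology B U) G \<and>
             closedin (subbase_topology B U) C \<and> x \<in> G \<and> G \<subseteq> C \<and> C \<subseteq> S"
  shows "regular_space (subbase_topology B U)"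
  unfolding neighbourhood_base_of_closedin[symmetric] neighbourhood_base_of
proof (intro allI impI, elim conjE)
  let ?T = "subbase_topology B U"
  fix W x assume "openin ?T W" "x \<in> W"
  then obtain \<V> where \<V>: "finite \<V>" "\<And>S. S \<in> \<V> \<Longrightarrow> B S" "x \<in> U \<inter> \<Inter>\<V>" "U \<inter> \<Inter>\<V> \<subseteq> W"
    by (rule subbase_topology_neighbourhood) auto
  have "\<forall>S\<in>\<V>. \<exists>G C. openin ?T G \<and> closedin ?T C \<and> x \<in> G \<and> G \<subseteq> C \<and> C \<subseteq> S"
    using assms \<V>(2,3) by blast
  then obtain G C where GC: "\<And>S. S \<in> \<V> \<Longrightarrow>
      openin ?T (G S) \<and> closedin ?T (C S) \<and> x \<in> G S \<and> G S \<subseteq> C S \<and> C S \<subseteq> S"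
    by metis
  show "\<exists>G' C'. openin ?T G' \<and> closedin ?T C' \<and> x \<in> G' \<and> G' \<subseteq> C' \<and> C' \<subseteq> W"
  proof (intro exI conjI)
    show "openin ?T (U \<inter> \<Inter>(G ` \<V>))"
      using GC \<V>(1) by (intro openin_Int_Inter) (auto simp: openin_topspace[of ?T, simplified])
    show "closedin ?T (\<Inter>(insert U (C ` \<V>)))"
      using GC closedin_topspace[of ?T] by (intro closedin_Inter) auto
    show "x \<in> U \<inter> \<Inter>(G ` \<V>)"
      using GC \<V>(3) by auto
    show "U \<inter> \<Inter>(G ` \<V>) \<subseteq> \<Inter>(insert U (C ` \<V>))"
      using GC by auto
    show "\<Inter>(insert U (C ` \<V>)) \<subseteq> W"
      using GC \<V>(4) by fastforce
  qed
qed

lemma completely_regular_space_if_locally_coarser: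
  assumes "\<And>W x. openin X W \<Longrightarrow> x \<in> W \<Longrightarrow> \<exists>Y W'. topspace Y = topspace X \<and>
             (\<forall>S. openin Y S \<longrightarrow> openin X S) \<and> completely_regular_space Y \<and>
             openin Y W' \<and> x \<in> W' \<and> W' \<subseteq> W"
  shows "completely_regular_space X"
  unfolding completely_regular_space_alt'
proof (intro allI impI)
  fix W x assume W: "openin X W" "x \<in> W"
  obtain Y W' where Y: "topspace Y = topspace X" "\<forall>S. openin Y S \<longrightarrow> openin X S"
      "completely_regular_space Y" "openin Y W'" "x \<in> W'" "W' \<subseteq> W"
    using assms[OF W] by blast
  obtain f where f: "continuous_map Y euclideanreal f" "f x = 0" "f ` (topspace Y - W') \<subseteq> {1}"
    using completely_regular_space_alt'[THEN iffD1, OF Y(3)] Y(4,5) by blast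
  have "continuous_map X Y id"
    using topology_finer_continuous_id[OF Y(1)] Y(2) by blast
  then have "continuous_map X euclideanreal f"
    using continuous_map_compose[OF _ f(1)] by fastforce
  moreover have "f ` (topspace X - W) \<subseteq> {1}"
    using f(3) Y(1,6) by blast
  ultimately show "\<exists>f. continuous_map X euclideanreal f \<and> f x = 0 \<and> f ` (topspace X - W) \<subseteq> {1}"
    using f(2) by blast
qed

text \<open>The condition \<open>P \<subseteq> P\<^sub>s\<^sub>e\<^sub>q\<close>, transferred to a subbase \<open>B\<close> of a topology on \<open>U\<close>.\<close>

definition seq_subbase :: "'b set \<Rightarrow> ('b set \<Rightarrow> bool) \<Rightarrow> bool" where
  "seq_subbase U B \<longleftrightarrow> (\<forall>S. B S \<longrightarrow> S \<subseteq> U \<and> (\<exists>G D. (\<forall>n. B (G n) \<and> B (D n) \<and>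
      G n \<subseteq> U - D n \<and> U - D n \<subseteq> G (Suc n)) \<and> (\<Union>n. G n) = S))"

lemma regular_space_seq_subbase:
  assumes "seq_subbase U B"
  shows "regular_space (subbase_topology B U)"
proof (rule regular_space_subbase_topology)
  let ?T = "subbase_topology B U"
  fix S x assume "B S" "x \<in> U \<inter> S"
  then have "\<exists>G D. (\<forall>n. B (G n) \<and> B (D n) \<and> G n \<subseteq> U - D n \<and> U - D n \<subseteq> G (Suc n)) \<and>
      (\<Union>n. G n) = S"
    using assms unfolding seq_subbase_def by simp
  then obtain G D where GD: "\<And>n. B (G n) \<and> B (D n) \<and> G n \<subseteq> U - D n \<and> U - D n \<subseteq> G (Suc n)"
    "(\<Union>n. G n) = S"
    by blast
  then obtain n where "x \<in> G n"
    using \<open>x \<in> U \<inter> S\<close> by blast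
  have "B (D n)" "D n \<subseteq> U"
    using GD(1) assms unfolding seq_subbase_def by blast+
  then have "closedin ?T (U - D n)"
    by (metis closedin_diff closedin_topspace openin_subbase_topology_inc topspace_subbase)
  moreover have "openin ?T (G n)"
    using GD(1) assms unfolding seq_subbase_def by (blast intro: openin_subbase_topology_inc)
  moreover have "U - D n \<subseteq> S"
    using GD by blast
  ultimately show "\<exists>G' C. openin ?T G' \<and> closedin ?T C \<and> x \<in> G' \<and> G' \<subseteq> C \<and> C \<subseteq> S"
    using GD(1) \<open>x \<in> G n\<close> by blast
qed

lemma countable_closure_under:
  assumes "countable A" "\<And>x. countable (N x)"
  obtains F where "A \<subseteq> F" "countable F" "\<And>x. x \<in> F \<Longrightarrow> N x \<subseteq> F"
proof
  define step where "step F = F \<union> (\<Union>x\<in>F. N x)" for F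
  have countable_step: "countable ((step ^^ k) A)" for k
    by (induction k) (simp_all add: step_def assms)
  show "A \<subseteq> (\<Union>k. (step ^^ k) A)"
    using UN_upper[of 0 UNIV "\<lambda>k. (step ^^ k) A"] by simp
  show "countable (\<Union>k. (step ^^ k) A)"
    using countable_step by simp
  show "N x \<subseteq> (\<Union>k. (step ^^ k) A)" if x: "x \<in> (\<Union>k. (step ^^ k) A)" for x
  proof -
    obtain k where "x \<in> (step ^^ k) A"
      using x by blast
    then have "N x \<subseteq> (step ^^ Suc k) A"
      by (auto simp: step_def)
    then show ?thesis
      by blast
  qed
qed

lemma seq_subbase_countable_subfamily:
  assumes "seq_subbase U B" "countable \<A>" "\<And>S. S \<in> \<A> \<Longrightarrow> B S"
  obtains F where "\<A> \<subseteq> F" "countable F" "\<And>S. S \<in> F \<Longrightarrow> B S" "seq_subbase U (\<lambda>S. S \<in> F)"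
proof -
  obtain G D where GD: "\<And>S. B S \<Longrightarrow> S \<subseteq> U \<and> (\<forall>n. B (G S n) \<and> B (D S n) \<and>
      G S n \<subseteq> U - D S n \<and> U - D S n \<subseteq> G S (Suc n)) \<and> (\<Union>n. G S n) = S"
    using assms(1) unfolding seq_subbase_def by metis
  obtain F where F: "\<A> \<subseteq> F" "countable F" "\<And>S. S \<in> F \<Longrightarrow> range (G S) \<union> range (D S) \<subseteq> F"
    by (rule countable_closure_under[OF assms(2), of "\<lambda>S. range (G S) \<union> range (D S)"]) auto
  let ?F = "F \<inter> Collect B"
  show thesis
  proof
    show "\<A> \<subseteq> ?F" "countable ?F" "\<And>S. S \<in> ?F \<Longrightarrow> B S"
      using F assms(3) by auto
    show "seq_subbase U (\<lambda>S. S \<in> ?F)"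
      unfolding seq_subbase_def
    proof (intro allI impI)
      fix S assume "S \<in> ?F"
      then have "B S" "range (G S) \<union> range (D S) \<subseteq> F"
        using F(3) by auto
      then show "S \<subseteq> U \<and> (\<exists>G' D'. (\<forall>n. G' n \<in> ?F \<and> D' n \<in> ?F \<and>
          G' n \<subseteq> U - D' n \<and> U - D' n \<subseteq> G' (Suc n)) \<and> (\<Union>n. G' n) = S)"
        using GD[of S] by (intro conjI exI[of _ "G S"] exI[of _ "D S"]) auto
    qed
  qed
qed

theorem completely_regular_space_seq_subbase:
  assumes "seq_subbase U B"
  shows "completely_regular_space (subbase_topology B U)"
proof (rule completely_regular_space_if_locally_coarser)
  fix W x assume "openin (subbase_topology B U) W" "x \<in> W"
  then obtain \<V> where \<V>: "finite \<V>" "\<And>S. S \<in> \<V> \<Longrightarrow> B S" "x \<in> U \<inter> \<Inter>\<V>" "U \<inter> \<Inter>\<V> \<subseteq> W"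
    by (rule subbase_topology_neighbourhood) auto
  obtain F where F: "\<V> \<subseteq> F" "countable F" "\<And>S. S \<in> F \<Longrightarrow> B S" "seq_subbase U (\<lambda>S. S \<in> F)"
    using seq_subbase_countable_subfamily[OF assms countable_finite[OF \<V>(1)] \<V>(2)] by blast
  let ?Y = "subbase_topology (\<lambda>S. S \<in> F) U"
  have "regular_space ?Y"
    by (rule regular_space_seq_subbase[OF F(4)])
  moreover have "Lindelof_space ?Y"
    using F(2) by (simp add: second_countable_imp_Lindelof_space second_countable_subbase_topology)
  ultimately have "completely_regular_space ?Y"
    by (simp add: normal_imp_completely_regular_space_B regular_Lindelof_imp_normal_space)
  moreover have "openin ?Y (U \<inter> \<Inter>\<V>)"
    using F(1) \<V>(1) by (intro openin_subbase_topology_Inter) auto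
  moreover have "\<forall>S. openin ?Y S \<longrightarrow> openin (subbase_topology B U) S"
    using F(3) openin_subbase_topology_mono by blast
  ultimately show "\<exists>Y W'. topspace Y = topspace (subbase_topology B U) \<and>
      (\<forall>S. openin Y S \<longrightarrow> openin (subbase_topology B U) S) \<and> completely_regular_space Y \<and>
      openin Y W' \<and> x \<in> W' \<and> W' \<subseteq> W"
    using \<V>(3,4) by (intro exI[of _ ?Y] exI[of _ "U \<inter> \<Inter>\<V>"]) auto
qed

lemma QP_topology_eq_subbase_topology:
  "QP_topology X P = subbase_topology (\<lambda>S. \<exists>V\<in>P. S = pclass X P ` V) (pquot X P)"
  by (simp add: QP_topology_def)

lemma pclass_eq_iff:
  assumes "x \<in> X" "y \<in> X"
  shows "pclass X P x = pclass X P y \<longleftrightarrow> (\<forall>V\<in>P. x \<in> V \<longleftrightarrow> y \<in> V)"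
proof
  assume "pclass X P x = pclass X P y"
  then have "y \<in> pclass X P x"
    using assms(2) by (simp add: pclass_def)
  then show "\<forall>V\<in>P. x \<in> V \<longleftrightarrow> y \<in> V"
    by (simp add: pclass_def)
qed (auto simp: pclass_def)

lemma mem_image_pclass_iff:
  assumes "V \<in> P" "V \<subseteq> X" "x \<in> X"
  shows "pclass X P x \<in> pclass X P ` V \<longleftrightarrow> x \<in> V"
  using assms pclass_eq_iff[of x X _ P] by blast

lemma image_pclass_Diff:
  assumes "V \<in> P" "V \<subseteq> X"
  shows "pclass X P ` (X - V) = pquot X P - pclass X P ` V"
  using mem_image_pclass_iff[OF assms] unfolding pquot_def by blast

lemma seq_subbase_QP:
  assumes "P \<subseteq> Pow X" "P \<subseteq> Pseq X P"
  shows "seq_subbase (pquot X P) (\<lambda>S. \<exists>V\<in>P. S = pclass X P ` V)"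
  unfolding seq_subbase_def
proof (intro allI impI, elim bexE)
  let ?q = "pclass X P"
  fix S W assume "W \<in> P" "S = ?q ` W"
  then obtain G D where GD: "range G \<subseteq> P" "range D \<subseteq> P"
    "\<And>k. G k \<subseteq> X - D k \<and> X - D k \<subseteq> G (Suc k)" "(\<Union>n. G n) = W"
    using assms(2) unfolding Pseq_def by blast
  have complement: "pquot X P - ?q ` D n = ?q ` (X - D n)" for n
    using image_pclass_Diff[of "D n" P X] GD(2) assms(1) by blast
  have "S \<subseteq> pquot X P"
    using \<open>W \<in> P\<close> \<open>S = ?q ` W\<close> assms(1) unfolding pquot_def by blast
  moreover have "\<forall>n. (\<exists>V\<in>P. ?q ` G n = ?q ` V) \<and> (\<exists>V\<in>P. ?q ` D n = ?q ` V) \<and>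
      ?q ` G n \<subseteq> pquot X P - ?q ` D n \<and> pquot X P - ?q ` D n \<subseteq> ?q ` G (Suc n)"
    unfolding complement using GD(1-3) by (blast intro: image_mono)
  moreover have "(\<Union>n. ?q ` G n) = S"
    using GD(4) \<open>S = ?q ` W\<close> by blast
  ultimately show "S \<subseteq> pquot X P \<and> (\<exists>G D. (\<forall>n. (\<exists>V\<in>P. G n = ?q ` V) \<and> (\<exists>V\<in>P. D n = ?q ` V) \<and>
      G n \<subseteq> pquot X P - D n \<and> pquot X P - D n \<subseteq> G (Suc n)) \<and> (\<Union>n. G n) = S)"
    by (intro conjI exI[of _ "\<lambda>n. ?q ` G n"] exI[of _ "\<lambda>n. ?q ` D n"]) auto
qed

lemma t0_space_QP:
  assumes "P \<subseteq> Pow X"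
  shows "t0_space (QP_topology X P)"
  unfolding t0_space_def QP_topology_eq_subbase_topology topspace_subbase
proof (intro ballI impI)
  let ?q = "pclass X P"
  fix a b assume "a \<in> pquot X P" "b \<in> pquot X P" "a \<noteq> b"
  then obtain x y where xy: "x \<in> X" "y \<in> X" "a = ?q x" "b = ?q y"
    unfolding pquot_def by blast
  then obtain V where V: "V \<in> P" "\<not> (x \<in> V \<longleftrightarrow> y \<in> V)"
    using \<open>a \<noteq> b\<close> pclass_eq_iff[OF xy(1,2), of P] by auto
  have "openin (subbase_topology (\<lambda>S. \<exists>V\<in>P. S = ?q ` V) (pquot X P)) (?q ` V)"
    using V(1) assms unfolding pquot_def by (intro openin_subbase_topology_inc) auto
  moreover have "a \<notin> ?q ` V \<longleftrightarrow> b \<in> ?q ` V"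
    using V assms xy mem_image_pclass_iff[of V P X x] mem_image_pclass_iff[of V P X y] by auto
  ultimately show "\<exists>U. openin (subbase_topology (\<lambda>S. \<exists>V\<in>P. S = ?q ` V) (pquot X P)) U \<and>
      (a \<notin> U \<longleftrightarrow> b \<in> U)"
    by blast
qed

theorem theorem5:
  fixes X :: "'a set" and P :: "'a set set"
  assumes "ring_of_subsets X P"
    and "P \<subseteq> Pseq X P"
  shows "completely_regular_space (QP_topology X P) \<and> t1_space (QP_topology X P)"
proof
  have PX: "P \<subseteq> Pow X"
    using assms(1) by (simp add: ring_of_subsets_def)
  show completely_regular: "completely_regular_space (QP_topology X P)"
    unfolding QP_topology_eq_subbase_topology
    by (rule completely_regular_space_seq_subbase[OF seq_subbase_QP[OF PX assms(2)]])
  show "t1_space (QP_topology X P)"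
    using completely_regular_imp_regular_space[OF completely_regular] t0_space_QP[OF PX]
    by (simp add: Hausdorff_imp_t1_space regular_t0_imp_Hausdorff_space)
qed

end
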